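(* Assume $\ell^{(k)}_t\in[0,1]$ a.s. and that experts are ordered so that $\mu_1<\mu_2\le\dots\le\mu_K$, so $\Delta=\mu_2-\mu_1>0$. Then for every $t\ge1$: (i) if for each $k$ the sequence $(\ell^{(k)}_t)_t$ is i.i.d., $$\mathbb P\Big(L^{(1)}_t>\min_{2\le k\le K}L^{(k)}_t\Big)\le e^{-t\Delta^2/2}\Big[2+\sum_{k=3}^K\exp\big(-2t(\mu_1-\mu_k)(\mu_2-\mu_k)\big)\Big];$$ (ii) if for each $k$ the sequence $(\ell^{(k)}_t)_t$ is strictly stationary and $\varphi$-mixing with coefficients $(\varphi^{(k)}_n)$, $$\mathbb P\Big(L^{(1)}_t>\min_{2\le k\le K}L^{(k)}_t\Big)\le\sqrt e\sum_{k=1}^K\exp\Big(-\frac{t(\mu_1-\mu_k+\Delta/2)^2}{2\theta^{(k)}_t}\Big),\qquad \theta^{(k)}_t:=1+4\sum_{n=1}^{t-1}\varphi^{(k)}_n.$$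
   Context: Experts $k\in[K]$ have random losses $\ell^{(k)}_t$, $t\ge1$ (no independence across experts assumed), cumulative losses $L^{(k)}_t=\sum_{s=1}^t\ell^{(k)}_s$, and time-invariant means $\mu_k=\mathbb E[\ell^{(k)}_t]$. $\varphi$-mixing coefficients of a sequence $(U_i)$: $\varphi_n=\sup_m\sup\{|\mathbb P(B|A)-\mathbb P(B)|:A\in\sigma(U_i:i\le m),\mathbb P(A)>0,B\in\sigma(U_{m+n})\}$. *)

theory Defs
  imports "HOL-Probability.Probability"
begin

text \<open>Losses: ell k s w is the loss of expert k at time s (s \<ge> 1) in outcome w.
  Cumulative loss L k t w = sum of the losses at times 1..t.\<close>
definition cum_loss :: "(nat \<Rightarrow> nat \<Rightarrow> 'a \<Rightarrow> real) \<Rightarrow> nat \<Rightarrow> nat \<Rightarrow> 'a \<Rightarrow> real" where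
  "cum_loss ell k t w = (\<Sum>s=1..t. ell k s w)"

definition gen_sigma :: "'a measure \<Rightarrow> (nat \<Rightarrow> 'a \<Rightarrow> real) \<Rightarrow> nat set \<Rightarrow> 'a set set" where
  "gen_sigma M U I = sigma_sets (space M) {U i -` B \<inter> space M | i B. i \<in> I \<and> B \<in> sets borel}"

definition phi_coeff :: "'a measure \<Rightarrow> (nat \<Rightarrow> 'a \<Rightarrow> real) \<Rightarrow> nat \<Rightarrow> real" where
  "phi_coeff M U n = Sup {\<bar>measure M (A \<inter> B) / measure M A - measure M B\<bar> | m A B.
      1 \<le> m \<and> A \<in> gen_sigma M U {1..m} \<and> measure M A > 0 \<and> B \<in> gen_sigma M U {m + n}}"

definition strictly_stationary :: "'a measure \<Rightarrow> (nat \<Rightarrow> 'a \<Rightarrow> real) \<Rightarrow> bool" where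
  "strictly_stationary M U \<longleftrightarrow> (\<forall>h::nat.
     distr M (PiM UNIV (\<lambda>_. borel)) (\<lambda>w s. U (s + 1 + h) w)
   = distr M (PiM UNIV (\<lambda>_. borel)) (\<lambda>w s. U (s + 1) w))"

definition phi_mixing :: "'a measure \<Rightarrow> (nat \<Rightarrow> 'a \<Rightarrow> real) \<Rightarrow> bool" where
  "phi_mixing M U \<longleftrightarrow> (phi_coeff M U \<longlonglongrightarrow> 0)"

definition theta :: "'a measure \<Rightarrow> (nat \<Rightarrow> 'a \<Rightarrow> real) \<Rightarrow> nat \<Rightarrow> real" where
  "theta M U t = 1 + 4 * (\<Sum>n=1..t-1. phi_coeff M U n)"

end

theory Submission
  imports Defs
begin

text \<open>
  Let c = t (\<mu>_1 + \<mu>_2) / 2. If the best expert is overtaken at time t, then L^(1)_t \<ge> c or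
  L^(k)_t \<le> c for some k \<ge> 2, and each of these events is a deviation of a cumulative loss
  from its mean t \<mu>_k by at least t \<bar>\<mu>_k - c/t\<bar> \<ge> t \<Delta> / 2. A union bound thus reduces both
  claims to tail bounds for a single expert: Hoeffding's inequality in the independent case,
  and in the \<phi>-mixing case a Hoeffding-type inequality proved below.

  For the latter let Y_i be the centred losses and \<psi>_m = exp (l (Y_1 + ... + Y_m)). Bounding
  exp (l Y_(m+1)) by its chord over the range of Y_(m+1) gives
  E \<psi>_(m+1) \<le> exp (l^2 / 8) E \<psi>_m + (e^l - 1) \<bar>E [\<psi>_m Y_(m+1)]\<bar>. Writing \<psi>_m as a
  telescoping sum of increments \<psi>_(k+1) - \<psi>_k, each bounded by (e^l - 1) \<psi>_k and determined
  by the first k + 1 losses, the covariance inequality \<bar>E [h Y_n]\<bar> \<le> \<phi>_(n-k) E \<bar>h\<bar> for h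
  determined by the first k losses gives \<bar>E [\<psi>_m Y_(m+1)]\<bar> \<le> (e^l - 1) \<Sum>_(k<m) \<phi>_(m-k) E \<psi>_k.
  By induction E \<psi>_t \<le> exp (t l^2 \<theta>_t / 2) whenever l \<theta>_t \<le> 1, and Chernoff's bound yields
  P (Y_1 + ... + Y_t \<ge> x) \<le> exp (- x^2 / (2 t \<theta>_t)): the claimed bound, even without the
  factor sqrt e. The covariance inequality follows from the definition of \<phi> by integrating
  over the superlevel sets of Y_n and then of h (layer-cake formula).
\<close>

lemma exp_le_chord:
  fixes l a :: real
  assumes l: "0 \<le> l" and a: "-1 \<le> a" "a \<le> 0"
  obtains A B where "0 \<le> A" "A \<le> exp (l\<^sup>2 / 8)" "0 \<le> B" "B \<le> exp l - 1"
    "\<And>y. a \<le> y \<Longrightarrow> y \<le> a + 1 \<Longrightarrow> exp (l * y) \<le> A + B * y"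
proof
  define B where "B = exp (l * (a + 1)) - exp (l * a)"
  define A where "A = exp (l * a) - a * B"
  show "exp (l * y) \<le> A + B * y" if "a \<le> y" "y \<le> a + 1" for y
  proof -
    have "exp (l * ((1 - (y - a)) * a + (y - a) * (a + 1)))
        \<le> (1 - (y - a)) * exp (l * a) + (y - a) * exp (l * (a + 1))"
      using convex_onD[OF convex_on_exp[OF l], of "y - a" a "a + 1"] that by simp
    moreover have "(1 - (y - a)) * a + (y - a) * (a + 1) = y" by (simp add: algebra_simps)
    ultimately show ?thesis by (simp add: A_def B_def algebra_simps)
  qed
  have B_eq: "B = exp (l * a) * (exp l - 1)" by (simp add: B_def algebra_simps exp_add)
  have "exp (l * a) \<le> 1" using l a by (simp add: mult_nonneg_nonpos)
  then show "B \<le> exp l - 1" "0 \<le> B" unfolding B_eq using l by (simp_all add: mult_left_le_one_le)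
  \<comment> \<open>The chord's value at 0 is the quantity bounded in Hoeffding's lemma, with p = -a.\<close>
  have pos: "0 < 1 + (- a) * (exp l - 1)" using l a by (intro add_pos_nonneg mult_nonneg_nonneg) auto
  have A_eq: "A = exp (-l * (- a) + ln (1 + (- a) * (exp l - 1)))"
    using pos by (simp add: A_def B_eq exp_add algebra_simps)
  show "A \<le> exp (l\<^sup>2 / 8)" unfolding A_eq using Hoeffdings_lemma_aux[OF l, of "- a"] a by simp
  show "0 \<le> A" unfolding A_eq by simp
qed

text \<open>One step of the moment-generating-function recursion, with a = \<phi>_1 + ... + \<phi>_(t-1).\<close>

lemma exp_mgf_step_le:
  fixes l a :: real
  assumes l: "0 < l" and a: "0 \<le> a" and la: "l * (1 + 4 * a) \<le> 1"
  shows "exp (l\<^sup>2 / 8) + (exp l - 1)\<^sup>2 * a \<le> exp (l\<^sup>2 * (1 + 4 * a) / 2)"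
proof -
  have "0 \<le> l * (4 * a)" using l a by simp
  then have l1: "l \<le> 1" using la by (simp add: algebra_simps)
  have poly: "a * (1 + l)\<^sup>2 \<le> 3/8 + 2 * a"
  proof -
    have "3 * (a * l) * (1 + 4 * a) \<le> 3 * a" using mult_left_mono[OF la a] by (simp add: algebra_simps)
    also have "\<dots> \<le> (3/8 + a) * (1 + 4 * a)"
    proof -
      have "0 \<le> 4 * (a - 1/16)\<^sup>2" by simp
      moreover have "(3/8 + a) * (1 + 4 * a) = 3 * a + 4 * (a - 1/16)\<^sup>2 + 23/64"
        by (simp add: power2_eq_square field_simps)
      ultimately show ?thesis by linarith
    qed
    finally have "3 * (a * l) * (1 + 4 * a) \<le> (3/8 + a) * (1 + 4 * a)" .
    then have "3 * (a * l) \<le> 3/8 + a" using a by (simp add: mult_le_cancel_right pos_add_strict)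
    moreover have "a * l\<^sup>2 \<le> a * l" using l1 l a by (simp add: power2_eq_square mult_left_mono)
    ultimately show ?thesis by (simp add: power2_eq_square algebra_simps)
  qed
  have "(l + l\<^sup>2)\<^sup>2 * a = l\<^sup>2 * (a * (1 + l)\<^sup>2)" by (simp add: power2_eq_square algebra_simps)
  also have "\<dots> \<le> l\<^sup>2 * (3/8 + 2 * a)" using poly by (rule mult_left_mono) simp
  finally have "(l + l\<^sup>2)\<^sup>2 * a \<le> l\<^sup>2 * (3/8 + 2 * a)" .
  moreover have "(exp l - 1)\<^sup>2 * a \<le> (l + l\<^sup>2)\<^sup>2 * a"
    using exp_bound[of l] l l1 a by (intro mult_right_mono power_mono) auto
  ultimately have "(exp l - 1)\<^sup>2 * a \<le> l\<^sup>2 * (3/8 + 2 * a)" by linarith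
  moreover have "1 * (l\<^sup>2 * (3/8 + 2 * a)) \<le> exp (l\<^sup>2 / 8) * (l\<^sup>2 * (3/8 + 2 * a))"
    using a by (intro mult_right_mono) auto
  ultimately have "exp (l\<^sup>2 / 8) + (exp l - 1)\<^sup>2 * a \<le> exp (l\<^sup>2 / 8) * (1 + l\<^sup>2 * (3/8 + 2 * a))"
    by (simp add: distrib_left)
  also have "\<dots> \<le> exp (l\<^sup>2 / 8) * exp (l\<^sup>2 * (3/8 + 2 * a))"
    by (intro mult_left_mono) (auto simp: exp_ge_add_one_self add.commute)
  also have "\<dots> = exp (l\<^sup>2 * (1 + 4 * a) / 2)" by (simp flip: exp_add add: algebra_simps)
  finally show ?thesis .
qed

lemma abs_exp_mult_minus_one_le:
  fixes l y :: real
  assumes "0 \<le> l" "\<bar>y\<bar> \<le> 1"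
  shows "\<bar>exp (l * y) - 1\<bar> \<le> exp l - 1"
proof (cases "0 \<le> y")
  case True
  then have "l * y \<le> l" "0 \<le> l * y" using assms by (simp_all add: mult_left_le)
  then show ?thesis by (simp add: abs_le_iff)
next
  case False
  have "l * (-1) \<le> l * y" using assms by (rule_tac mult_left_mono) auto
  then have "exp (-l) \<le> exp (l * y)" by simp
  moreover have "exp (l * y) \<le> 1" using assms False by (simp add: mult_nonneg_nonpos)
  moreover have "2 \<le> exp l + exp (-l)"
    using exp_ge_add_one_self[of l] exp_ge_add_one_self[of "-l"] by linarith
  ultimately show ?thesis by linarith
qed

lemma sum_lessThan_diff_reindex:
  fixes f :: "nat \<Rightarrow> 'a::comm_monoid_add"
  shows "(\<Sum>k<m. f (m - k)) = (\<Sum>j=1..m. f j)"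
  using sum.nat_diff_reindex[of "\<lambda>j. f (Suc j)" m] by (simp add: sum_bounds_lt_plus1 Suc_diff_Suc)

section \<open>Layer-cake comparisons\<close>

lemma nn_integral_mult_layer_cake:
  fixes g :: "'a \<Rightarrow> real" and w :: "'a \<Rightarrow> ennreal"
  assumes "sigma_finite_measure M"
    and g[measurable]: "g \<in> borel_measurable M" and w[measurable]: "w \<in> borel_measurable M"
  shows "(\<integral>\<^sup>+x. ennreal (g x) * w x \<partial>M)
       = (\<integral>\<^sup>+s. indicator {0..} s * (\<integral>\<^sup>+x. indicator {x\<in>space M. s < g x} x * w x \<partial>M) \<partial>lborel)"
proof -
  interpret pair_sigma_finite lborel M
    by (simp add: pair_sigma_finite.intro lborel.sigma_finite_measure_axioms assms(1))
  have "ennreal (g x) = (\<integral>\<^sup>+s. indicator {0..<g x} s \<partial>lborel)" for x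
    by (cases "0 \<le> g x") (auto simp: ennreal_neg)
  then have "(\<integral>\<^sup>+x. ennreal (g x) * w x \<partial>M)
      = (\<integral>\<^sup>+x. (\<integral>\<^sup>+s. indicator {0..<g x} s * w x \<partial>lborel) \<partial>M)"
    by (simp add: nn_integral_multc)
  also have "\<dots> = (\<integral>\<^sup>+s. (\<integral>\<^sup>+x. indicator {0..<g x} s * w x \<partial>M) \<partial>lborel)"
  proof (rule Fubini')
    have "{p \<in> space (lborel \<Otimes>\<^sub>M M). 0 \<le> fst p \<and> fst p < g (snd p)} \<in> sets (lborel \<Otimes>\<^sub>M M)"
      by measurable
    then have "(\<lambda>p. indicator {p \<in> space (lborel \<Otimes>\<^sub>M M). 0 \<le> fst p \<and> fst p < g (snd p)} p
        * w (snd p)) \<in> borel_measurable (lborel \<Otimes>\<^sub>M M)"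
      by measurable
    then show "(\<lambda>(s, x). indicator {0..<g x} s * w x) \<in> borel_measurable (lborel \<Otimes>\<^sub>M M)"
      by (rule measurable_cong[THEN iffD1, rotated]) (auto simp: indicator_def)
  qed
  also have "\<dots> = (\<integral>\<^sup>+s. indicator {0..} s * (\<integral>\<^sup>+x. indicator {x\<in>space M. s < g x} x * w x \<partial>M) \<partial>lborel)"
    by (auto simp: indicator_def intro!: nn_integral_cong)
  finally show ?thesis .
qed

lemma nn_integral_mult_mono_superlevel:
  fixes g :: "'a \<Rightarrow> real" and w v :: "'a \<Rightarrow> ennreal"
  assumes "sigma_finite_measure M" and "g \<in> borel_measurable M"
    and "w \<in> borel_measurable M" and "v \<in> borel_measurable M"
    and superlevel_le: "\<And>s. 0 \<le> s \<Longrightarrow> (\<integral>\<^sup>+x. indicator {x\<in>space M. s < g x} x * w x \<partial>M)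
                                        \<le> (\<integral>\<^sup>+x. indicator {x\<in>space M. s < g x} x * v x \<partial>M)"
  shows "(\<integral>\<^sup>+x. ennreal (g x) * w x \<partial>M) \<le> (\<integral>\<^sup>+x. ennreal (g x) * v x \<partial>M)"
  unfolding nn_integral_mult_layer_cake[OF assms(1,2,3)] nn_integral_mult_layer_cake[OF assms(1,2,4)]
  by (intro nn_integral_mono) (auto split: split_indicator intro: superlevel_le)

lemma borel_measurable_antimono_measure:
  assumes "finite_measure M" and "\<And>s s'. s \<le> s' \<Longrightarrow> C s' \<subseteq> C s" and "\<And>s. C s \<in> sets M"
  shows "(\<lambda>s::real. measure M (C s)) \<in> borel_measurable borel"
proof -
  interpret finite_measure M by fact
  have "mono (\<lambda>s. - measure M (C s))"
    using assms by (auto simp: mono_def intro!: finite_measure_mono)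
  from borel_measurable_mono[OF this] have "(\<lambda>s. - (- measure M (C s))) \<in> borel_measurable borel"
    by measurable
  then show ?thesis by simp
qed

lemma nn_integral_ennreal_lincomb:
  fixes f g :: "'a \<Rightarrow> real"
  assumes "f \<in> borel_measurable M" "g \<in> borel_measurable M" "\<And>x. 0 \<le> f x" "\<And>x. 0 \<le> g x"
    and "0 \<le> a" "0 \<le> b"
  shows "(\<integral>\<^sup>+x. ennreal (a * f x + b * g x) \<partial>M)
       = ennreal a * (\<integral>\<^sup>+x. ennreal (f x) \<partial>M) + ennreal b * (\<integral>\<^sup>+x. ennreal (g x) \<partial>M)"
  using assms by (simp add: ennreal_plus ennreal_mult nn_integral_add nn_integral_cmult del: ennreal_plus_if)

lemma nn_integral_ennreal_mult:
  fixes f g :: "'a \<Rightarrow> real"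
  assumes "integrable M (\<lambda>x. f x * g x)" "AE x in M. 0 \<le> f x" "AE x in M. 0 \<le> g x"
  shows "(\<integral>\<^sup>+x. ennreal (f x) * ennreal (g x) \<partial>M) = ennreal (\<integral>x. f x * g x \<partial>M)"
proof -
  have "(\<integral>\<^sup>+x. ennreal (f x) * ennreal (g x) \<partial>M) = (\<integral>\<^sup>+x. ennreal (f x * g x) \<partial>M)"
    using assms(2,3) by (intro nn_integral_cong_AE) (auto simp: ennreal_mult elim: eventually_elim2)
  also have "\<dots> = ennreal (\<integral>x. f x * g x \<partial>M)"
    using assms by (intro nn_integral_eq_integral) (auto elim: eventually_elim2)
  finally show ?thesis .
qed

lemma (in finite_measure) integrable_mult_bounded:
  fixes f g :: "'a \<Rightarrow> real"
  assumes "f \<in> borel_measurable M" "g \<in> borel_measurable M"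
    and "AE x in M. \<bar>f x\<bar> \<le> C" "AE x in M. \<bar>g x\<bar> \<le> D"
  shows "integrable M (\<lambda>x. f x * g x)"
proof (rule integrable_const_bound[where B="\<bar>C\<bar> * \<bar>D\<bar>"])
  show "AE x in M. norm (f x * g x) \<le> \<bar>C\<bar> * \<bar>D\<bar>"
    using assms(3,4) by eventually_elim (auto simp: abs_mult intro: mult_mono)
qed (use assms in simp)

lemma (in finite_measure) integral_mult_mono_superlevel:
  fixes g w v :: "'a \<Rightarrow> real"
  assumes [measurable]: "g \<in> borel_measurable M" "w \<in> borel_measurable M" "v \<in> borel_measurable M"
    and g: "\<And>x. 0 \<le> g x" "AE x in M. g x \<le> C"
    and w: "AE x in M. 0 \<le> w x \<and> w x \<le> D" and v: "AE x in M. 0 \<le> v x \<and> v x \<le> D"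
    and superlevel_le: "\<And>s. 0 \<le> s \<Longrightarrow> (\<integral>x. indicator {x\<in>space M. s < g x} x * w x \<partial>M)
                                        \<le> (\<integral>x. indicator {x\<in>space M. s < g x} x * v x \<partial>M)"
  shows "(\<integral>x. g x * w x \<partial>M) \<le> (\<integral>x. g x * v x \<partial>M)"
proof -
  have "AE x in M. \<bar>w x\<bar> \<le> D" "AE x in M. \<bar>v x\<bar> \<le> D"
    using w v by (auto elim: eventually_mono)
  then have int: "integrable M (\<lambda>x. f x * u x)"
    if "f \<in> borel_measurable M" "AE x in M. \<bar>f x\<bar> \<le> C'" "u = w \<or> u = v" for f u C'
    using that by (intro integrable_mult_bounded[where C=C' and D=D]) auto
  have int_g: "AE x in M. \<bar>g x\<bar> \<le> C" using g by (auto elim: eventually_mono)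
  have int_ind: "AE x in M. \<bar>indicator S x :: real\<bar> \<le> 1" for S by (simp add: indicator_def)
  have "ennreal (\<integral>x. g x * w x \<partial>M) = (\<integral>\<^sup>+x. ennreal (g x) * ennreal (w x) \<partial>M)"
    using g w by (intro nn_integral_ennreal_mult[symmetric] int[OF _ int_g]) (auto elim: eventually_mono)
  also have "\<dots> \<le> (\<integral>\<^sup>+x. ennreal (g x) * ennreal (v x) \<partial>M)"
  proof (rule nn_integral_mult_mono_superlevel)
    fix s :: real assume "0 \<le> s"
    have "(\<integral>\<^sup>+x. indicator {x\<in>space M. s < g x} x * ennreal (u x) \<partial>M)
        = ennreal (\<integral>x. indicator {x\<in>space M. s < g x} x * u x \<partial>M)" if "u = w \<or> u = v" for u
      using nn_integral_ennreal_mult[OF int[OF _ int_ind that], of "{x\<in>space M. s < g x}"] that w v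
      by (auto simp: ennreal_indicator elim: eventually_mono)
    then show "(\<integral>\<^sup>+x. indicator {x\<in>space M. s < g x} x * ennreal (w x) \<partial>M)
        \<le> (\<integral>\<^sup>+x. indicator {x\<in>space M. s < g x} x * ennreal (v x) \<partial>M)"
      using superlevel_le[OF \<open>0 \<le> s\<close>] by (simp add: ennreal_leI)
  qed (auto intro: finite_measure_axioms finite_measure.sigma_finite_measure)
  also have "\<dots> = ennreal (\<integral>x. g x * v x \<partial>M)"
    using g v by (intro nn_integral_ennreal_mult int[OF _ int_g]) (auto elim: eventually_mono)
  finally show ?thesis
    using g v by (subst (asm) ennreal_le_iff) (auto intro!: integral_nonneg_AE elim: eventually_mono)
qed

lemma abs_diff_le_by_nn_integral:
  fixes F G :: "real \<Rightarrow> real"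
  assumes [measurable]: "F \<in> borel_measurable borel" "G \<in> borel_measurable borel"
    and nonneg: "\<And>s. 0 \<le> F s" "\<And>s. 0 \<le> G s" "0 \<le> a" "0 \<le> b" "0 \<le> c" "0 \<le> d"
    and F: "(\<integral>\<^sup>+s. ennreal (F s) \<partial>lborel) = ennreal a" and G: "(\<integral>\<^sup>+s. ennreal (G s) \<partial>lborel) = ennreal b"
    and deviation: "\<And>s. \<bar>F s - c * G s\<bar> \<le> d * indicator {0..<1} s"
  shows "\<bar>a - c * b\<bar> \<le> d"
proof -
  have unit: "(\<integral>\<^sup>+s. ennreal (indicator {0..<1::real} s) \<partial>lborel) = 1" by (simp add: ennreal_indicator)
  \<comment> \<open>The factor 1 puts the right-hand side in the shape of \<open>nn_integral_ennreal_lincomb\<close>.\<close>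
  have upper: "F s \<le> c * G s + d * indicator {0..<1} s" and lower: "c * G s \<le> 1 * F s + d * indicator {0..<1} s"
    for s
  proof -
    from deviation[of s] show "F s \<le> c * G s + d * indicator {0..<1} s"
      and "c * G s \<le> 1 * F s + d * indicator {0..<1} s" by (simp_all add: abs_le_iff)
  qed
  have "ennreal a \<le> (\<integral>\<^sup>+s. ennreal (c * G s + d * indicator {0..<1} s) \<partial>lborel)"
    unfolding F[symmetric] by (intro nn_integral_mono ennreal_leI upper)
  also have "\<dots> = ennreal (c * b + d)"
    using nonneg by (subst nn_integral_ennreal_lincomb) (auto simp: G unit ennreal_mult ennreal_plus simp del: ennreal_plus_if)
  finally have "a \<le> c * b + d" using nonneg by (subst (asm) ennreal_le_iff) auto
  have "ennreal (c * b) = (\<integral>\<^sup>+s. ennreal (c * G s) \<partial>lborel)"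
    using nonneg by (simp add: G[symmetric] ennreal_mult nn_integral_cmult)
  also have "\<dots> \<le> (\<integral>\<^sup>+s. ennreal (1 * F s + d * indicator {0..<1} s) \<partial>lborel)"
    by (intro nn_integral_mono ennreal_leI lower)
  also have "\<dots> = ennreal (a + d)"
    using nonneg by (subst nn_integral_ennreal_lincomb) (auto simp: F unit ennreal_plus simp del: ennreal_plus_if)
  finally have "c * b \<le> a + d" using nonneg by (subst (asm) ennreal_le_iff) auto
  with \<open>a \<le> c * b + d\<close> show ?thesis by (simp add: abs_le_iff)
qed

definition gen_measure :: "'a measure \<Rightarrow> (nat \<Rightarrow> 'a \<Rightarrow> real) \<Rightarrow> nat set \<Rightarrow> 'a measure" where
  "gen_measure M U I = sigma (space M) {U i -` B \<inter> space M | i B. i \<in> I \<and> B \<in> sets borel}"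

lemma sets_gen_measure: "sets (gen_measure M U I) = gen_sigma M U I"
  unfolding gen_measure_def gen_sigma_def by (rule sets_measure_of) auto

lemma space_gen_measure: "space (gen_measure M U I) = space M"
  unfolding gen_measure_def by (rule space_measure_of) auto

lemma measurable_gen_measure: "i \<in> I \<Longrightarrow> U i \<in> borel_measurable (gen_measure M U I)"
  by (rule measurableI) (auto simp: space_gen_measure sets_gen_measure gen_sigma_def intro!: sigma_sets.Basic)

lemma subalgebra_gen_measure:
  assumes "\<And>i. i \<in> I \<Longrightarrow> U i \<in> borel_measurable M"
  shows "subalgebra M (gen_measure M U I)"
  unfolding subalgebra_def sets_gen_measure space_gen_measure gen_sigma_def
  by (auto intro!: sigma_sets_le_sets_iff[THEN iffD2] measurable_sets assms)

context prob_space
begin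

lemma abs_cond_prob_diff_le_1: "0 < prob A \<Longrightarrow> \<bar>prob (A \<inter> B) / prob A - prob B\<bar> \<le> 1"
proof -
  assume A: "0 < prob A"
  then have "A \<in> events" using measure_notin_sets by fastforce
  then have "prob (A \<inter> B) \<le> prob A"
    by (cases "A \<inter> B \<in> events") (auto intro: finite_measure_mono simp: measure_notin_sets)
  then have "prob (A \<inter> B) / prob A \<le> 1" "0 \<le> prob (A \<inter> B) / prob A"
    using A by auto
  then show ?thesis using measure_nonneg[of M B] prob_le_1[of B] by linarith
qed

lemma abs_cond_prob_diff_le_phi_coeff:
  assumes "1 \<le> m" "A \<in> gen_sigma M U {1..m}" "B \<in> gen_sigma M U {m + n}" "prob A > 0"
  shows "\<bar>prob (A \<inter> B) / prob A - prob B\<bar> \<le> phi_coeff M U n"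
  unfolding phi_coeff_def
  by (rule cSup_upper) (use assms abs_cond_prob_diff_le_1 in \<open>blast, fastforce intro: bdd_aboveI[where M=1]\<close>)

lemma phi_coeff_le_1: "phi_coeff M U n \<le> 1"
  unfolding phi_coeff_def
proof (rule cSup_least)
  have "space M \<in> gen_sigma M U {1..1}" "{} \<in> gen_sigma M U {1 + n}"
    unfolding gen_sigma_def by (auto intro: sigma_sets_top sigma_sets.Empty)
  then show "{\<bar>prob (A \<inter> B) / prob A - prob B\<bar> | m A B.
      1 \<le> m \<and> A \<in> gen_sigma M U {1..m} \<and> prob A > 0 \<and> B \<in> gen_sigma M U {m + n}} \<noteq> {}"
    by (fastforce simp: prob_space)
qed (use abs_cond_prob_diff_le_1 in blast)

lemma phi_coeff_nonneg: "0 \<le> phi_coeff M U n"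
proof -
  have "space M \<in> gen_sigma M U {1..1}" "{} \<in> gen_sigma M U {1 + n}"
    unfolding gen_sigma_def by (auto intro: sigma_sets_top sigma_sets.Empty)
  from abs_cond_prob_diff_le_phi_coeff[OF _ this] show ?thesis by (simp add: prob_space)
qed

lemma abs_prob_Int_diff_le_phi_coeff:
  assumes "1 \<le> m" "A \<in> gen_sigma M U {1..m}" "B \<in> gen_sigma M U {m + n}"
    and "A \<in> events" "B \<in> events"
  shows "\<bar>prob (A \<inter> B) - prob A * prob B\<bar> \<le> prob A * phi_coeff M U n"
proof (cases "prob A > 0")
  case True
  with abs_cond_prob_diff_le_phi_coeff[OF assms(1-3)] show ?thesis
    by (simp add: abs_le_iff field_simps)
next
  case False
  then have "prob A = 0" using measure_nonneg[of M A] by linarith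
  moreover have "prob (A \<inter> B) \<le> prob A" using assms by (intro finite_measure_mono) auto
  ultimately show ?thesis by simp
qed

lemma theta_ge_1: "1 \<le> theta M U t"
  unfolding theta_def using sum_nonneg[of "{1..t-1}" "phi_coeff M U"] phi_coeff_nonneg by force

end

lemma gen_sigma_reflect: "gen_sigma M (\<lambda>i w. 1 - U i w) I = gen_sigma M U I"
proof -
  have reflect_borel: "(\<lambda>x::real. 1 - x) -` B \<in> sets borel" if "B \<in> sets borel" for B
    using that by (intro measurable_sets_borel) auto
  have "{(\<lambda>w. 1 - U i w) -` B \<inter> space M | i B. i \<in> I \<and> B \<in> sets borel}
      = {U i -` B \<inter> space M | i B. i \<in> I \<and> B \<in> sets borel}" (is "?L = ?R")
  proof (intro equalityI subsetI)
    fix A assume "A \<in> ?L"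
    then obtain i B where "A = U i -` ((\<lambda>x. 1 - x) -` B) \<inter> space M" "i \<in> I" "B \<in> sets borel"
      by auto
    then show "A \<in> ?R" using reflect_borel by blast
  next
    fix A assume "A \<in> ?R"
    then obtain i B where "A = U i -` B \<inter> space M" "i \<in> I" "B \<in> sets borel"
      by auto
    moreover have "U i -` B = (\<lambda>w. 1 - U i w) -` ((\<lambda>x. 1 - x) -` B)" by auto
    ultimately show "A \<in> ?L" using reflect_borel by blast
  qed
  then show ?thesis by (simp add: gen_sigma_def)
qed

lemma theta_reflect: "theta M (\<lambda>i w. 1 - U i w) t = theta M U t"
  unfolding theta_def phi_coeff_def gen_sigma_reflect ..

section \<open>A covariance inequality for \<phi>-mixing sequences\<close>

locale unit_interval_sequence = prob_space M for M :: "'a measure" +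
  fixes X :: "nat \<Rightarrow> 'a \<Rightarrow> real"
  assumes random_variable_X: "1 \<le> s \<Longrightarrow> X s \<in> borel_measurable M"
    and X_in_unit: "1 \<le> s \<Longrightarrow> AE w in M. 0 \<le> X s w \<and> X s w \<le> 1"
begin

lemma integrable_X: "1 \<le> s \<Longrightarrow> integrable M (X s)"
  using X_in_unit[of s] random_variable_X[of s]
  by (intro integrable_const_bound[where B=1]) (auto elim: eventually_mono)

lemma expectation_X_nonneg: "1 \<le> s \<Longrightarrow> 0 \<le> expectation (X s)"
  using X_in_unit[of s] by (intro integral_nonneg_AE) (auto elim: eventually_mono)

lemma expectation_X_le_1: "1 \<le> s \<Longrightarrow> expectation (X s) \<le> 1"
  using integral_mono_AE[of M "X s" "\<lambda>_. 1"] integrable_X X_in_unit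
  by (force simp: prob_space elim: eventually_mono)

lemma unit_interval_sequence_reflect: "unit_interval_sequence M (\<lambda>i w. 1 - X i w)"
proof
  show "(\<lambda>w. 1 - X s w) \<in> borel_measurable M" if "1 \<le> s" for s
    using random_variable_X[OF that] by measurable
  show "AE w in M. 0 \<le> 1 - X s w \<and> 1 - X s w \<le> 1" if "1 \<le> s" for s
    using X_in_unit[OF that] by (rule eventually_mono) auto
qed

lemma subalgebra_past: "subalgebra M (gen_measure M X {1..k})"
  by (rule subalgebra_gen_measure) (auto intro: random_variable_X)

lemma measurable_past:
  "h \<in> borel_measurable (gen_measure M X {1..k}) \<Longrightarrow> h \<in> borel_measurable M"
  by (rule measurable_from_subalg[OF subalgebra_past])

lemma past_events: "A \<in> gen_sigma M X {1..k} \<Longrightarrow> A \<in> events"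
  using subalgebra_past by (auto simp: subalgebra_def sets_gen_measure)

definition centered :: "nat \<Rightarrow> 'a \<Rightarrow> real" where
  "centered i w = X i w - expectation (X i)"

lemma centered_past: "i \<in> {1..k} \<Longrightarrow> centered i \<in> borel_measurable (gen_measure M X {1..k})"
  unfolding centered_def using measurable_gen_measure[of i "{1..k}" X M] by measurable

lemma borel_measurable_centered: "1 \<le> i \<Longrightarrow> centered i \<in> borel_measurable M"
  using centered_past[of i i] measurable_past by auto

lemma centered_bounds:
  "1 \<le> i \<Longrightarrow> AE w in M. - expectation (X i) \<le> centered i w \<and> centered i w \<le> - expectation (X i) + 1
                      \<and> \<bar>centered i w\<bar> \<le> 1"
  using expectation_X_nonneg[of i] expectation_X_le_1[of i]
  by (intro eventually_mono[OF X_in_unit]) (auto simp: centered_def abs_le_iff)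

lemma expectation_centered: "1 \<le> i \<Longrightarrow> expectation (centered i) = 0"
  unfolding centered_def using integrable_X by (simp add: prob_space)

lemma superlevel_in_gen_sigma: "{w \<in> space M. s < X n w} \<in> gen_sigma M X {n}"
proof -
  have "{w \<in> space M. s < X n w} = X n -` {s<..} \<inter> space M" by auto
  then show ?thesis unfolding gen_sigma_def by (auto intro!: sigma_sets.Basic exI[of _ "{s<..}"])
qed

lemma prob_superlevel_null:
  assumes "1 \<le> n" "1 \<le> s" "A \<in> events"
  shows "prob (A \<inter> {w \<in> space M. s < X n w}) = 0"
proof -
  have [measurable]: "X n \<in> borel_measurable M" using assms by (intro random_variable_X)
  have "AE w in M. \<not> s < X n w" using X_in_unit[OF assms(1)] assms(2) by (auto elim: eventually_mono)
  from emeasure_eq_0_AE[OF this] have "prob {w \<in> space M. s < X n w} = 0" by (simp add: emeasure_eq_measure)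
  moreover have "prob (A \<inter> {w \<in> space M. s < X n w}) \<le> prob {w \<in> space M. s < X n w}"
    using assms(3) by (intro finite_measure_mono) auto
  ultimately show ?thesis using measure_nonneg[of M "A \<inter> {w \<in> space M. s < X n w}"] by linarith
qed

lemma abs_prob_Int_superlevel_diff_le:
  assumes "1 \<le> k" "k < n" "A \<in> gen_sigma M X {1..k}"
  shows "\<bar>prob (A \<inter> {w \<in> space M. s < X n w}) - prob A * prob {w \<in> space M. s < X n w}\<bar>
           \<le> prob A * phi_coeff M X (n - k) * indicator {..<1} s"
proof -
  have [measurable]: "X n \<in> borel_measurable M" using assms by (intro random_variable_X) simp
  have A: "A \<in> events" using assms(3) by (rule past_events)
  show ?thesis
  proof (cases "s < 1")
    case True
    have "{w \<in> space M. s < X n w} \<in> gen_sigma M X {k + (n - k)}"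
      using assms superlevel_in_gen_sigma by simp
    then show ?thesis using True assms A by (simp add: abs_prob_Int_diff_le_phi_coeff)
  next
    case False
    then show ?thesis using assms A prob_superlevel_null[of n s A] prob_superlevel_null[of n s "space M"]
      by (simp add: Int_absorb1 subset_iff)
  qed
qed

lemma ennreal_integral_indicator_mult_X:
  assumes "1 \<le> n" "A \<in> events"
  shows "ennreal (\<integral>w. indicator A w * X n w \<partial>M)
       = (\<integral>\<^sup>+s. ennreal (indicator {0..} s * prob (A \<inter> {w \<in> space M. s < X n w})) \<partial>lborel)"
proof -
  have [measurable]: "X n \<in> borel_measurable M" using assms by (intro random_variable_X)
  have superlevel: "(\<integral>\<^sup>+w. indicator {w \<in> space M. s < X n w} w * indicator A w \<partial>M)
      = prob (A \<inter> {w \<in> space M. s < X n w})" for s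
  proof -
    have "(\<integral>\<^sup>+w. indicator {w \<in> space M. s < X n w} w * indicator A w \<partial>M)
        = (\<integral>\<^sup>+w. indicator (A \<inter> {w \<in> space M. s < X n w}) w \<partial>M)"
      by (intro nn_integral_cong) (auto simp: indicator_def)
    then show ?thesis using assms(2) by (simp add: emeasure_eq_measure)
  qed
  have "ennreal (\<integral>w. indicator A w * X n w \<partial>M) = (\<integral>\<^sup>+w. ennreal (X n w) * indicator A w \<partial>M)"
    using assms X_in_unit[OF assms(1)]
    by (subst nn_integral_ennreal_mult[symmetric])
      (auto intro!: integrable_mult_bounded[where C=1 and D=1] nn_integral_cong
        simp: ennreal_indicator mult.commute elim: eventually_mono)
  also have "\<dots> = (\<integral>\<^sup>+s. indicator {0..} s
      * (\<integral>\<^sup>+w. indicator {w \<in> space M. s < X n w} w * indicator A w \<partial>M) \<partial>lborel)"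
    using assms(2) by (intro nn_integral_mult_layer_cake) (auto simp: prob_space_imp_sigma_finite prob_space_axioms)
  finally show ?thesis by (simp add: superlevel ennreal_mult' ennreal_indicator)
qed

lemma phi_covariance_indicator:
  assumes "1 \<le> k" "k < n" and A: "A \<in> gen_sigma M X {1..k}"
  shows "\<bar>(\<integral>w. indicator A w * X n w \<partial>M) - prob A * expectation (X n)\<bar> \<le> prob A * phi_coeff M X (n - k)"
proof -
  have n: "1 \<le> n" using assms by simp
  have [measurable]: "X n \<in> borel_measurable M" using n by (rule random_variable_X)
  have [measurable]: "A \<in> events" using A by (rule past_events)
  define F where "F s = indicator {0..} s * prob (A \<inter> {w \<in> space M. s < X n w})" for s :: real
  define G where "G s = indicator {0..} s * prob {w \<in> space M. s < X n w}" for s :: real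
  have F_meas: "F \<in> borel_measurable borel" and G_meas: "G \<in> borel_measurable borel"
    unfolding F_def G_def by (intro borel_measurable_times borel_measurable_indicator
        borel_measurable_antimono_measure finite_measure_axioms; auto)+
  have F_nonneg: "0 \<le> F s" and G_nonneg: "0 \<le> G s" for s by (simp_all add: F_def G_def)
  have "(\<integral>w. indicator (space M) w * X n w \<partial>M) = expectation (X n)"
    by (intro Bochner_Integration.integral_cong) auto
  then have G: "(\<integral>\<^sup>+s. ennreal (G s) \<partial>lborel) = ennreal (expectation (X n))"
    using ennreal_integral_indicator_mult_X[OF n sets.top] by (simp add: G_def Int_absorb1 subset_iff)
  have F: "(\<integral>\<^sup>+s. ennreal (F s) \<partial>lborel) = ennreal (\<integral>w. indicator A w * X n w \<partial>M)"
    unfolding F_def using n by (intro ennreal_integral_indicator_mult_X[symmetric]) auto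
  have deviation: "\<bar>F s - prob A * G s\<bar> \<le> prob A * phi_coeff M X (n - k) * indicator {0..<1} s" for s
    using abs_prob_Int_superlevel_diff_le[OF assms(1-3), of s] by (auto simp: F_def G_def indicator_def)
  have "0 \<le> (\<integral>w. indicator A w * X n w \<partial>M)"
    using X_in_unit[OF n] by (intro integral_nonneg_AE) (auto elim: eventually_mono)
  from abs_diff_le_by_nn_integral[OF F_meas G_meas F_nonneg G_nonneg this expectation_X_nonneg[OF n] _ _ F G deviation]
  show ?thesis by (simp add: phi_coeff_nonneg)
qed

lemma integral_indicator_mult_X_bounds:
  assumes "1 \<le> k" "k < n" and S: "S \<in> gen_sigma M X {1..k}"
  defines "\<phi> \<equiv> phi_coeff M X (n - k)"
  shows "(\<integral>w. indicator S w * X n w \<partial>M) \<le> (\<integral>w. indicator S w * (expectation (X n) + \<phi>) \<partial>M)"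
    and "(\<integral>w. indicator S w * expectation (X n) \<partial>M) \<le> (\<integral>w. indicator S w * (X n w + \<phi>) \<partial>M)"
proof -
  have n: "1 \<le> n" using assms by simp
  have [measurable]: "S \<in> events" using S by (rule past_events)
  have [measurable]: "X n \<in> borel_measurable M" using n by (rule random_variable_X)
  have "integrable M (\<lambda>w. indicator S w * X n w)"
    using X_in_unit[OF n] by (intro integrable_mult_bounded[where C=1 and D=1]) (auto elim: eventually_mono)
  moreover have "integrable M (\<lambda>w. indicator S w * \<phi>)"
    using phi_coeff_nonneg by (intro integrable_mult_bounded[where C=1 and D=\<phi>]) (auto simp: \<phi>_def)
  ultimately have "(\<integral>w. indicator S w * (X n w + \<phi>) \<partial>M) = (\<integral>w. indicator S w * X n w \<partial>M) + prob S * \<phi>"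
    by (simp add: distrib_left sets.Int_space_eq2)
  moreover have const: "(\<integral>w. indicator S w * c \<partial>M) = prob S * c" for c
    by (simp add: sets.Int_space_eq2 mult.commute)
  ultimately show "(\<integral>w. indicator S w * X n w \<partial>M) \<le> (\<integral>w. indicator S w * (expectation (X n) + \<phi>) \<partial>M)"
    and "(\<integral>w. indicator S w * expectation (X n) \<partial>M) \<le> (\<integral>w. indicator S w * (X n w + \<phi>) \<partial>M)"
    using phi_covariance_indicator[OF assms(1-3)] unfolding const
    by (simp_all add: \<phi>_def abs_le_iff distrib_left)
qed

lemma phi_covariance_nonneg:
  assumes "1 \<le> k" "k < n"
    and h_past: "h \<in> borel_measurable (gen_measure M X {1..k})"
    and h_nonneg: "\<And>w. 0 \<le> h w" and h_bounded: "AE w in M. h w \<le> C"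
  shows "\<bar>\<integral>w. h w * centered n w \<partial>M\<bar> \<le> phi_coeff M X (n - k) * (\<integral>w. h w \<partial>M)"
proof -
  define \<mu> where "\<mu> = expectation (X n)"
  define \<phi> where "\<phi> = phi_coeff M X (n - k)"
  have n: "1 \<le> n" using assms by simp
  have [measurable]: "h \<in> borel_measurable M" using h_past by (rule measurable_past)
  have [measurable]: "X n \<in> borel_measurable M" using n by (rule random_variable_X)
  have superlevel: "{w\<in>space M. s < h w} \<in> gen_sigma M X {1..k}" for s
  proof -
    have "{w\<in>space (gen_measure M X {1..k}). s < h w} \<in> sets (gen_measure M X {1..k})"
      using h_past by measurable
    then show ?thesis by (simp add: sets_gen_measure space_gen_measure)
  qed
  have bounded: "AE w in M. 0 \<le> X n w \<and> X n w \<le> 2" "AE w in M. 0 \<le> X n w + \<phi> \<and> X n w + \<phi> \<le> 2"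
    "0 \<le> \<mu> + \<phi> \<and> \<mu> + \<phi> \<le> 2" "0 \<le> \<mu> \<and> \<mu> \<le> 2"
    using X_in_unit[OF n] expectation_X_nonneg[OF n] expectation_X_le_1[OF n]
      phi_coeff_nonneg[of X "n - k"] phi_coeff_le_1[of X "n - k"]
    by (auto simp: \<phi>_def \<mu>_def elim: eventually_mono)
  have "(\<integral>w. h w * X n w \<partial>M) \<le> (\<integral>w. h w * (\<mu> + \<phi>) \<partial>M)"
    by (rule integral_mult_mono_superlevel[OF _ _ _ h_nonneg h_bounded bounded(1)])
      (use bounded(3) integral_indicator_mult_X_bounds(1)[OF assms(1,2) superlevel] in \<open>auto simp: \<mu>_def \<phi>_def\<close>)
  moreover have "(\<integral>w. h w * \<mu> \<partial>M) \<le> (\<integral>w. h w * (X n w + \<phi>) \<partial>M)"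
    by (rule integral_mult_mono_superlevel[OF _ _ _ h_nonneg h_bounded _ bounded(2)])
      (use bounded(4) integral_indicator_mult_X_bounds(2)[OF assms(1,2) superlevel] in \<open>auto simp: \<mu>_def \<phi>_def\<close>)
  moreover have "integrable M (\<lambda>w. h w * X n w)" "integrable M h"
    using h_bounded h_nonneg X_in_unit[OF n] integrable_mult_bounded[of h "\<lambda>_. 1" C 1]
    by (auto intro!: integrable_mult_bounded[where C=C and D=1] elim: eventually_mono)
  ultimately show ?thesis
    by (simp add: centered_def \<mu>_def[symmetric] \<phi>_def[symmetric] right_diff_distrib distrib_left abs_le_iff algebra_simps)
qed

lemma phi_covariance:
  assumes "1 \<le> k" "k < n"
    and h_past: "h \<in> borel_measurable (gen_measure M X {1..k})" and h_bounded: "AE w in M. \<bar>h w\<bar> \<le> C"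
  shows "\<bar>\<integral>w. h w * centered n w \<partial>M\<bar> \<le> phi_coeff M X (n - k) * (\<integral>w. \<bar>h w\<bar> \<partial>M)"
proof -
  define hp where "hp w = max (h w) 0" for w
  define hm where "hm w = max (- h w) 0" for w
  have hp_past[measurable]: "hp \<in> borel_measurable (gen_measure M X {1..k})"
    and hm_past[measurable]: "hm \<in> borel_measurable (gen_measure M X {1..k})"
    using h_past unfolding hp_def hm_def by measurable
  have "AE w in M. \<bar>hp w\<bar> \<le> C \<and> \<bar>hm w\<bar> \<le> C"
    using h_bounded by (rule eventually_mono) (auto simp: hp_def hm_def abs_le_iff)
  then have hp_bounded: "AE w in M. \<bar>hp w\<bar> \<le> C" and hm_bounded: "AE w in M. \<bar>hm w\<bar> \<le> C"
    by (auto elim: eventually_mono)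
  have [measurable]: "hp \<in> borel_measurable M" "hm \<in> borel_measurable M" "centered n \<in> borel_measurable M"
    using measurable_past[OF hp_past] measurable_past[OF hm_past] borel_measurable_centered[of n] assms by auto
  have centered_bounded: "AE w in M. \<bar>centered n w\<bar> \<le> 1"
    using centered_bounds[of n] assms by (auto elim: eventually_mono)
  have "integrable M (\<lambda>w. hp w * centered n w)" "integrable M (\<lambda>w. hm w * centered n w)"
    using hp_bounded hm_bounded centered_bounded by (auto intro!: integrable_mult_bounded)
  moreover have "integrable M hp" "integrable M hm"
    using hp_bounded hm_bounded by (auto intro!: integrable_const_bound[where B=C])
  moreover have "h w * centered n w = hp w * centered n w - hm w * centered n w" "\<bar>h w\<bar> = hp w + hm w" for w
    by (auto simp: hp_def hm_def max_def algebra_simps)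
  moreover have "\<bar>\<integral>w. hp w * centered n w \<partial>M\<bar> \<le> phi_coeff M X (n - k) * (\<integral>w. hp w \<partial>M)"
    using hp_bounded
    by (rule_tac phi_covariance_nonneg[OF assms(1,2) hp_past]) (auto simp: hp_def elim: eventually_mono)
  moreover have "\<bar>\<integral>w. hm w * centered n w \<partial>M\<bar> \<le> phi_coeff M X (n - k) * (\<integral>w. hm w \<partial>M)"
    using hm_bounded
    by (rule_tac phi_covariance_nonneg[OF assms(1,2) hm_past]) (auto simp: hm_def elim: eventually_mono)
  ultimately show ?thesis by (simp add: distrib_left abs_le_iff)
qed

section \<open>A Hoeffding inequality for \<phi>-mixing sequences\<close>

definition exp_sum :: "real \<Rightarrow> nat \<Rightarrow> 'a \<Rightarrow> real" where
  "exp_sum l n w = exp (l * (\<Sum>i=1..n. centered i w))"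

lemma exp_sum_0 [simp]: "exp_sum l 0 = (\<lambda>_. 1)"
  by (simp add: exp_sum_def[abs_def])

lemma exp_sum_Suc: "exp_sum l (Suc m) w = exp_sum l m w * exp (l * centered (Suc m) w)"
  by (simp add: exp_sum_def distrib_left exp_add)

lemma exp_sum_pos: "0 < exp_sum l n w"
  by (simp add: exp_sum_def)

lemma exp_sum_past: "j \<le> k \<Longrightarrow> exp_sum l j \<in> borel_measurable (gen_measure M X {1..k})"
proof -
  assume "j \<le> k"
  then have [measurable]: "(\<lambda>w. \<Sum>i=1..j. centered i w) \<in> borel_measurable (gen_measure M X {1..k})"
    by (intro borel_measurable_sum centered_past) auto
  show ?thesis unfolding exp_sum_def by measurable
qed

lemma borel_measurable_exp_sum[measurable]: "exp_sum l n \<in> borel_measurable M"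
  using exp_sum_past[of n n] measurable_past by auto

lemma exp_sum_le:
  assumes "0 \<le> l"
  shows "AE w in M. exp_sum l n w \<le> exp (l * n)"
proof -
  have "AE w in M. \<forall>i\<in>{1..n}. \<bar>centered i w\<bar> \<le> 1"
    using centered_bounds by (intro AE_finite_allI) (auto elim: eventually_mono)
  then show ?thesis
  proof (rule eventually_mono)
    fix w assume "\<forall>i\<in>{1..n}. \<bar>centered i w\<bar> \<le> 1"
    then have "(\<Sum>i=1..n. centered i w) \<le> (\<Sum>i=1..n. 1)" by (intro sum_mono) (auto simp: abs_le_iff)
    then have "(\<Sum>i=1..n. centered i w) \<le> n" by simp
    then show "exp_sum l n w \<le> exp (l * n)"
      using assms by (simp add: exp_sum_def mult_left_mono)
  qed
qed

lemma integrable_exp_sum: "0 \<le> l \<Longrightarrow> integrable M (exp_sum l n)"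
  using exp_sum_le[of l n] exp_sum_pos
  by (intro integrable_const_bound[where B="exp (l * n)"]) (auto elim: eventually_mono simp: less_imp_le)

lemma integrable_exp_sum_centered:
  assumes "0 \<le> l" "1 \<le> n"
  shows "integrable M (\<lambda>w. exp_sum l j w * centered n w)"
proof -
  have "AE w in M. \<bar>exp_sum l j w\<bar> \<le> exp (l * j)"
    using exp_sum_le[OF assms(1)] by (rule eventually_mono) (simp add: exp_sum_pos less_imp_le)
  then have "integrable M (\<lambda>w. exp_sum l j w * X n w)"
    using assms X_in_unit[OF assms(2)]
    by (intro integrable_mult_bounded[where D=1] random_variable_X) (auto elim: eventually_mono)
  then show ?thesis
    using integrable_exp_sum[OF assms(1)] by (simp add: centered_def right_diff_distrib)
qed

lemma exp_sum_increment_le: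
  assumes "0 \<le> l"
  shows "AE w in M. \<bar>exp_sum l (Suc k) w - exp_sum l k w\<bar> \<le> (exp l - 1) * exp_sum l k w"
proof -
  have "AE w in M. \<bar>centered (Suc k) w\<bar> \<le> 1" using centered_bounds[of "Suc k"] by (auto elim: eventually_mono)
  then show ?thesis
  proof (rule eventually_mono)
    fix w assume "\<bar>centered (Suc k) w\<bar> \<le> 1"
    then have "exp_sum l k w * \<bar>exp (l * centered (Suc k) w) - 1\<bar> \<le> exp_sum l k w * (exp l - 1)"
      using assms exp_sum_pos[of l k w] by (intro mult_left_mono abs_exp_mult_minus_one_le) auto
    moreover have "\<bar>exp_sum l (Suc k) w - exp_sum l k w\<bar> = exp_sum l k w * \<bar>exp (l * centered (Suc k) w) - 1\<bar>"
    proof -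
      have "exp_sum l (Suc k) w - exp_sum l k w = exp_sum l k w * (exp (l * centered (Suc k) w) - 1)"
        by (simp add: exp_sum_Suc right_diff_distrib)
      then show ?thesis using exp_sum_pos[of l k w] by (simp add: abs_mult)
    qed
    ultimately show "\<bar>exp_sum l (Suc k) w - exp_sum l k w\<bar> \<le> (exp l - 1) * exp_sum l k w"
      by (simp add: mult.commute)
  qed
qed

lemma covariance_exp_sum_increment:
  assumes "0 \<le> l" "k < m"
  shows "\<bar>\<integral>w. (exp_sum l (Suc k) w - exp_sum l k w) * centered (Suc m) w \<partial>M\<bar>
           \<le> phi_coeff M X (m - k) * ((exp l - 1) * expectation (exp_sum l k))"
proof -
  define D where "D w = exp_sum l (Suc k) w - exp_sum l k w" for w
  have D_past: "D \<in> borel_measurable (gen_measure M X {1..Suc k})"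
    unfolding D_def using exp_sum_past[of "Suc k" "Suc k"] exp_sum_past[of k "Suc k"] by measurable
  have D_le: "AE w in M. \<bar>D w\<bar> \<le> (exp l - 1) * exp_sum l k w"
    unfolding D_def by (rule exp_sum_increment_le[OF assms(1)])
  have D_bounded: "AE w in M. \<bar>D w\<bar> \<le> (exp l - 1) * exp (l * k)"
    using D_le exp_sum_le[OF assms(1), of k]
  proof eventually_elim
    case (elim w)
    have "0 \<le> exp l - 1" using assms(1) by simp
    then show ?case using elim by (meson mult_left_mono order_trans)
  qed
  have "\<bar>\<integral>w. D w * centered (Suc m) w \<partial>M\<bar> \<le> phi_coeff M X (Suc m - Suc k) * (\<integral>w. \<bar>D w\<bar> \<partial>M)"
    using assms by (intro phi_covariance[OF _ _ D_past D_bounded]) auto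
  also have "(\<integral>w. \<bar>D w\<bar> \<partial>M) \<le> (\<integral>w. (exp l - 1) * exp_sum l k w \<partial>M)"
    using D_le integrable_exp_sum[OF assms(1)] by (intro integral_mono_AE) (auto simp: D_def)
  then have "phi_coeff M X (Suc m - Suc k) * (\<integral>w. \<bar>D w\<bar> \<partial>M)
      \<le> phi_coeff M X (m - k) * ((exp l - 1) * expectation (exp_sum l k))"
    by (simp add: mult_left_mono phi_coeff_nonneg)
  finally show ?thesis unfolding D_def .
qed

lemma covariance_exp_sum:
  assumes "0 \<le> l"
  shows "\<bar>\<integral>w. exp_sum l m w * centered (Suc m) w \<partial>M\<bar>
           \<le> (exp l - 1) * (\<Sum>k<m. phi_coeff M X (m - k) * expectation (exp_sum l k))"
proof -
  define I where "I k = (\<integral>w. exp_sum l k w * centered (Suc m) w \<partial>M)" for k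
  have "I 0 = 0" by (simp add: I_def expectation_centered)
  then have "I m = (\<Sum>k<m. I (Suc k) - I k)" by (simp add: sum_lessThan_telescope)
  also have "\<dots> = (\<Sum>k<m. \<integral>w. (exp_sum l (Suc k) w - exp_sum l k w) * centered (Suc m) w \<partial>M)"
    using integrable_exp_sum_centered[OF assms]
    by (simp add: I_def left_diff_distrib Bochner_Integration.integral_diff)
  finally have "\<bar>I m\<bar> \<le> (\<Sum>k<m. \<bar>\<integral>w. (exp_sum l (Suc k) w - exp_sum l k w) * centered (Suc m) w \<partial>M\<bar>)"
    by (simp add: sum_abs)
  also have "\<dots> \<le> (\<Sum>k<m. phi_coeff M X (m - k) * ((exp l - 1) * expectation (exp_sum l k)))"
    using assms by (intro sum_mono covariance_exp_sum_increment) auto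
  finally show ?thesis by (simp add: I_def sum_distrib_left algebra_simps)
qed

lemma expectation_exp_sum_Suc_le:
  assumes "0 \<le> l"
  shows "expectation (exp_sum l (Suc m))
           \<le> exp (l\<^sup>2 / 8) * expectation (exp_sum l m) + (exp l - 1) * \<bar>\<integral>w. exp_sum l m w * centered (Suc m) w \<partial>M\<bar>"
proof -
  let ?a = "- expectation (X (Suc m))"
  have "-1 \<le> ?a" "?a \<le> 0"
    using expectation_X_nonneg[of "Suc m"] expectation_X_le_1[of "Suc m"] by auto
  then obtain A B where A: "0 \<le> A" "A \<le> exp (l\<^sup>2 / 8)" and B: "0 \<le> B" "B \<le> exp l - 1"
    and chord: "\<And>y. ?a \<le> y \<Longrightarrow> y \<le> ?a + 1 \<Longrightarrow> exp (l * y) \<le> A + B * y"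
    using exp_le_chord[OF assms] by metis
  have bounds: "AE w in M. ?a \<le> centered (Suc m) w \<and> centered (Suc m) w \<le> ?a + 1"
    using centered_bounds[of "Suc m"] by (auto elim: eventually_mono)
  have "expectation (exp_sum l (Suc m)) \<le> (\<integral>w. A * exp_sum l m w + B * (exp_sum l m w * centered (Suc m) w) \<partial>M)"
  proof (rule integral_mono_AE)
    show "AE w in M. exp_sum l (Suc m) w \<le> A * exp_sum l m w + B * (exp_sum l m w * centered (Suc m) w)"
      using bounds
    proof (rule eventually_mono, clarify)
      fix w assume "?a \<le> centered (Suc m) w" "centered (Suc m) w \<le> ?a + 1"
      then have "exp_sum l m w * exp (l * centered (Suc m) w) \<le> exp_sum l m w * (A + B * centered (Suc m) w)"
        using chord exp_sum_pos[of l m w] by (intro mult_left_mono) auto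
      then show "exp_sum l (Suc m) w \<le> A * exp_sum l m w + B * (exp_sum l m w * centered (Suc m) w)"
        by (simp add: exp_sum_Suc algebra_simps)
    qed
  qed (use integrable_exp_sum[OF assms] integrable_exp_sum_centered[OF assms] in auto)
  also have "\<dots> = A * expectation (exp_sum l m) + B * (\<integral>w. exp_sum l m w * centered (Suc m) w \<partial>M)"
    using integrable_exp_sum[OF assms] integrable_exp_sum_centered[OF assms] by simp
  also have "\<dots> \<le> exp (l\<^sup>2 / 8) * expectation (exp_sum l m) + (exp l - 1) * \<bar>\<integral>w. exp_sum l m w * centered (Suc m) w \<partial>M\<bar>"
  proof (rule add_mono)
    show "A * expectation (exp_sum l m) \<le> exp (l\<^sup>2 / 8) * expectation (exp_sum l m)"
      using A by (intro mult_right_mono integral_nonneg_AE) (auto simp: exp_sum_def)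
    show "B * (\<integral>w. exp_sum l m w * centered (Suc m) w \<partial>M) \<le> (exp l - 1) * \<bar>\<integral>w. exp_sum l m w * centered (Suc m) w \<partial>M\<bar>"
      using B by (intro order_trans[OF mult_left_mono mult_right_mono]) auto
  qed
  finally show ?thesis .
qed

lemma abs_integral_exp_sum_centered_le:
  assumes "0 \<le> l" "m < t" and bound: "\<And>k. k \<le> m \<Longrightarrow> expectation (exp_sum l k) \<le> R"
  shows "\<bar>\<integral>w. exp_sum l m w * centered (Suc m) w \<partial>M\<bar> \<le> (exp l - 1) * ((\<Sum>j=1..t-1. phi_coeff M X j) * R)"
proof -
  have "1 \<le> R" using bound[of 0] by (simp add: prob_space)
  have "(\<Sum>k<m. phi_coeff M X (m - k) * expectation (exp_sum l k)) \<le> (\<Sum>k<m. phi_coeff M X (m - k) * R)"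
    using bound by (intro sum_mono mult_left_mono phi_coeff_nonneg) auto
  also have "\<dots> = (\<Sum>j=1..m. phi_coeff M X j) * R"
    by (simp add: sum_distrib_right sum_lessThan_diff_reindex[of "\<lambda>j. phi_coeff M X j * R"])
  also have "\<dots> \<le> (\<Sum>j=1..t-1. phi_coeff M X j) * R"
    using assms \<open>1 \<le> R\<close> by (intro mult_right_mono sum_mono2 phi_coeff_nonneg) auto
  finally have "(\<Sum>k<m. phi_coeff M X (m - k) * expectation (exp_sum l k)) \<le> (\<Sum>j=1..t-1. phi_coeff M X j) * R" .
  moreover have "0 \<le> exp l - 1" using assms(1) by simp
  ultimately show ?thesis using covariance_exp_sum[OF assms(1), of m] by (meson mult_left_mono order_trans)
qed

lemma expectation_exp_sum_le:
  assumes l: "0 < l" "l * theta M X t \<le> 1" and "n \<le> t"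
  shows "expectation (exp_sum l n) \<le> exp (l\<^sup>2 * theta M X t / 2) ^ n"
proof -
  define r where "r = exp (l\<^sup>2 * theta M X t / 2)"
  define a where "a = (\<Sum>j=1..t-1. phi_coeff M X j)"
  have a0: "0 \<le> a" unfolding a_def by (intro sum_nonneg phi_coeff_nonneg)
  have theta_a: "theta M X t = 1 + 4 * a" by (simp add: theta_def a_def)
  have r1: "1 \<le> r" unfolding r_def theta_a using a0 by simp
  from \<open>n \<le> t\<close> show ?thesis unfolding r_def[symmetric]
  proof (induction n rule: less_induct)
    case (less n)
    show ?case
    proof (cases n)
      case 0
      then show ?thesis by (simp add: prob_space)
    next
      case (Suc m)
      have IH: "expectation (exp_sum l k) \<le> r ^ m" if "k \<le> m" for k
        using less.IH[of k] that Suc less.prems power_increasing[OF that r1] by simp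
      have cov: "\<bar>\<integral>w. exp_sum l m w * centered (Suc m) w \<partial>M\<bar> \<le> (exp l - 1) * (a * r ^ m)"
        unfolding a_def using l Suc less.prems IH by (intro abs_integral_exp_sum_centered_le) auto
      have "expectation (exp_sum l n)
          \<le> exp (l\<^sup>2 / 8) * expectation (exp_sum l m) + (exp l - 1) * \<bar>\<integral>w. exp_sum l m w * centered (Suc m) w \<partial>M\<bar>"
        using expectation_exp_sum_Suc_le[of l m] l Suc by simp
      also have "\<dots> \<le> exp (l\<^sup>2 / 8) * r ^ m + (exp l - 1) * ((exp l - 1) * (a * r ^ m))"
        using IH[of m] cov l by (intro add_mono mult_left_mono) auto
      also have "\<dots> = r ^ m * (exp (l\<^sup>2 / 8) + (exp l - 1)\<^sup>2 * a)" by (simp add: power2_eq_square algebra_simps)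
      also have "\<dots> \<le> r ^ m * r"
        unfolding r_def theta_a using exp_mgf_step_le[OF l(1) a0] l r1 theta_a
        by (intro mult_left_mono) auto
      finally show ?thesis by (simp add: Suc mult.commute)
    qed
  qed
qed

lemma prob_centered_sum_ge:
  assumes x: "0 < x" "x \<le> t"
  shows "prob {w \<in> space M. x \<le> (\<Sum>i=1..t. centered i w)} \<le> exp (- x\<^sup>2 / (2 * t * theta M X t))"
proof -
  define \<theta> where "\<theta> = theta M X t"
  define l where "l = x / (t * \<theta>)"
  have t: "0 < real t" and \<theta>: "1 \<le> \<theta>" using x theta_ge_1 by (auto simp: \<theta>_def)
  have l: "0 < l" "l * theta M X t \<le> 1"
    using x t \<theta> by (auto simp: l_def \<theta>_def[symmetric] field_simps)
  have "prob {w \<in> space M. x \<le> (\<Sum>i=1..t. centered i w)}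
      \<le> exp (- l * x) * (\<integral>w\<in>space M. exp (l * (\<Sum>i=1..t. centered i w)) \<partial>M)"
  proof (rule Chernoff_ineq_ge[OF l(1)])
    have "integrable M (\<lambda>w. exp (l * (\<Sum>i=1..t. centered i w)))"
      using integrable_exp_sum[of l t] l unfolding exp_sum_def[abs_def] by simp
    then show "set_integrable M (space M) (\<lambda>w. exp (l * (\<Sum>i=1..t. centered i w)))"
      unfolding set_integrable_def
      by (rule Bochner_Integration.integrable_cong[OF refl, THEN iffD1, rotated]) (simp add: indicator_def)
  qed simp
  also have "(\<integral>w\<in>space M. exp (l * (\<Sum>i=1..t. centered i w)) \<partial>M) = expectation (exp_sum l t)"
    using integrable_exp_sum[of l t] l unfolding exp_sum_def[abs_def] by (simp add: set_integral_space)
  also have "\<dots> \<le> exp (l\<^sup>2 * \<theta> / 2) ^ t"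
    unfolding \<theta>_def by (rule expectation_exp_sum_le[OF l order_refl])
  also have "exp (- l * x) * exp (l\<^sup>2 * \<theta> / 2) ^ t = exp (- l * x + t * (l\<^sup>2 * \<theta> / 2))"
    by (simp add: exp_of_nat_mult[symmetric] exp_add[symmetric])
  also have "- l * x + t * (l\<^sup>2 * \<theta> / 2) = - x\<^sup>2 / (2 * t * \<theta>)"
    using t \<theta> by (simp add: l_def power2_eq_square field_simps)
  finally show ?thesis unfolding \<theta>_def by simp
qed

lemma prob_centered_sum_le:
  assumes "0 < x" "x \<le> t"
  shows "prob {w \<in> space M. (\<Sum>i=1..t. centered i w) \<le> - x} \<le> exp (- x\<^sup>2 / (2 * t * theta M X t))"
proof -
  interpret reflected: unit_interval_sequence M "\<lambda>i w. 1 - X i w"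
    by (rule unit_interval_sequence_reflect)
  have "reflected.centered i w = - centered i w" if "1 \<le> i" for i w
    using integrable_X[OF that] by (simp add: reflected.centered_def centered_def prob_space)
  then have "{w \<in> space M. (\<Sum>i=1..t. centered i w) \<le> - x} = {w \<in> space M. x \<le> (\<Sum>i=1..t. reflected.centered i w)}"
    by (auto simp: sum_negf)
  then show ?thesis using reflected.prob_centered_sum_ge[OF assms] by (simp add: theta_reflect)
qed

end

lemma (in finite_measure) measure_Min_less_le:
  fixes f :: "'a \<Rightarrow> real" and g :: "'b \<Rightarrow> 'a \<Rightarrow> real"
  assumes "finite I" "I \<noteq> {}" and f: "f \<in> borel_measurable M" and g: "\<And>i. i \<in> I \<Longrightarrow> g i \<in> borel_measurable M"
  shows "measure M {w\<in>space M. Min ((\<lambda>i. g i w) ` I) < f w}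
           \<le> measure M {w\<in>space M. c \<le> f w} + (\<Sum>i\<in>I. measure M {w\<in>space M. g i w \<le> c})"
proof -
  have events: "{w\<in>space M. c \<le> f w} \<in> sets M" "\<And>i. i \<in> I \<Longrightarrow> {w\<in>space M. g i w \<le> c} \<in> sets M"
    using f g by (auto intro: borel_measurable_le measurable_sets_Collect)
  have "{w\<in>space M. Min ((\<lambda>i. g i w) ` I) < f w}
      \<subseteq> {w\<in>space M. c \<le> f w} \<union> (\<Union>i\<in>I. {w\<in>space M. g i w \<le> c})"
    using assms(1,2) by (auto simp: Min_less_iff not_le intro: less_imp_le order.strict_trans)
  then have "measure M {w\<in>space M. Min ((\<lambda>i. g i w) ` I) < f w}
      \<le> measure M ({w\<in>space M. c \<le> f w} \<union> (\<Union>i\<in>I. {w\<in>space M. g i w \<le> c}))"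
    using events assms(1) by (intro finite_measure_mono) auto
  also have "\<dots> \<le> measure M {w\<in>space M. c \<le> f w} + measure M (\<Union>i\<in>I. {w\<in>space M. g i w \<le> c})"
    using events assms(1) by (intro measure_Un_le) auto
  also have "measure M (\<Union>i\<in>I. {w\<in>space M. g i w \<le> c}) \<le> (\<Sum>i\<in>I. measure M {w\<in>space M. g i w \<le> c})"
    using events assms(1) by (intro finite_measure_subadditive_finite) auto
  finally show ?thesis by simp
qed

locale expert_losses = prob_space M for M :: "'a measure" +
  fixes ell :: "nat \<Rightarrow> nat \<Rightarrow> 'a \<Rightarrow> real" and K :: nat and mu :: "nat \<Rightarrow> real"
  assumes two_le_K: "2 \<le> K"
    and random_variable_loss: "\<And>k s. k \<in> {1..K} \<Longrightarrow> 1 \<le> s \<Longrightarrow> ell k s \<in> borel_measurable M"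
    and loss_in_unit: "\<And>k s. k \<in> {1..K} \<Longrightarrow> 1 \<le> s \<Longrightarrow> AE w in M. 0 \<le> ell k s w \<and> ell k s w \<le> 1"
    and expectation_loss: "\<And>k s. k \<in> {1..K} \<Longrightarrow> 1 \<le> s \<Longrightarrow> expectation (ell k s) = mu k"
    and best_expert: "mu 1 < mu 2"
    and mu_mono: "\<And>k. 2 \<le> k \<Longrightarrow> k < K \<Longrightarrow> mu k \<le> mu (Suc k)"
begin

definition overtaken :: "nat \<Rightarrow> 'a set" where
  "overtaken t = {w \<in> space M. cum_loss ell 1 t w > Min ((\<lambda>k. cum_loss ell k t w) ` {2..K})}"

definition margin :: "nat \<Rightarrow> real" where
  "margin k = \<bar>(mu 1 + mu 2) / 2 - mu k\<bar>"

lemma unit_interval_sequence_loss: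
  assumes "k \<in> {1..K}"
  shows "unit_interval_sequence M (ell k)"
proof
  show "ell k s \<in> borel_measurable M" if "1 \<le> s" for s using assms that by (rule random_variable_loss)
  show "AE w in M. 0 \<le> ell k s w \<and> ell k s w \<le> 1" if "1 \<le> s" for s using assms that by (rule loss_in_unit)
qed

lemma mu_bounds: "k \<in> {1..K} \<Longrightarrow> 0 \<le> mu k \<and> mu k \<le> 1"
  using unit_interval_sequence.expectation_X_nonneg[OF unit_interval_sequence_loss, of k 1]
    unit_interval_sequence.expectation_X_le_1[OF unit_interval_sequence_loss, of k 1]
  by (simp add: expectation_loss)

lemma mu_2_le:
  assumes "k \<in> {2..K}"
  shows "mu 2 \<le> mu k"
proof -
  have "2 \<le> k" "k \<le> K" using assms by auto
  then show ?thesis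
  proof (induction k rule: dec_induct)
    case (step n)
    then show ?case using mu_mono[of n] by simp
  qed simp
qed

lemma margin_1: "margin 1 = (mu 2 - mu 1) / 2"
  using best_expert by (simp add: margin_def)

lemma margin_other: "k \<in> {2..K} \<Longrightarrow> margin k = mu k - (mu 1 + mu 2) / 2"
  using mu_2_le[of k] best_expert by (simp add: margin_def)

lemma margin_bounds:
  assumes "k \<in> {1..K}"
  shows "(mu 2 - mu 1) / 2 \<le> margin k" "margin k \<le> 1"
proof -
  show "(mu 2 - mu 1) / 2 \<le> margin k"
  proof (cases "k = 1")
    case False
    then have "k \<in> {2..K}" using assms by auto
    then have "margin k - (mu 2 - mu 1) / 2 = mu k - mu 2" by (simp add: margin_other field_simps)
    then show ?thesis using mu_2_le[OF \<open>k \<in> {2..K}\<close>] by linarith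
  qed (use margin_1 in simp)
  show "margin k \<le> 1"
    using assms mu_bounds[of k] mu_bounds[of 1] mu_bounds[of 2] two_le_K
    by (auto simp: margin_def abs_le_iff field_simps)
qed

lemma margin_pos:
  assumes "k \<in> {1..K}"
  shows "0 < margin k"
proof -
  have "0 < (mu 2 - mu 1) / 2" using best_expert by simp
  then show ?thesis using margin_bounds(1)[OF assms] by linarith
qed

lemma margin_sq: "(margin k)\<^sup>2 = (mu 1 - mu k + (mu 2 - mu 1) / 2)\<^sup>2"
proof -
  have "(margin k)\<^sup>2 = ((mu 1 + mu 2) / 2 - mu k)\<^sup>2" by (simp add: margin_def)
  also have "(mu 1 + mu 2) / 2 - mu k = mu 1 - mu k + (mu 2 - mu 1) / 2" by (simp add: field_simps)
  finally show ?thesis .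
qed

lemma two_margin_sq: "2 * (margin k)\<^sup>2 = (mu 2 - mu 1)\<^sup>2 / 2 + 2 * (mu 1 - mu k) * (mu 2 - mu k)"
  unfolding margin_sq by (simp add: power2_eq_square field_simps)

lemma cum_loss_centered:
  assumes "k \<in> {1..K}"
  shows "cum_loss ell k t w = t * mu k + (\<Sum>i=1..t. unit_interval_sequence.centered M (ell k) i w)"
proof -
  interpret unit_interval_sequence M "ell k" by (rule unit_interval_sequence_loss[OF assms])
  have "ell k i w = mu k + centered i w" if "i \<in> {1..t}" for i
    using that assms by (simp add: centered_def expectation_loss)
  then show ?thesis by (simp add: cum_loss_def sum.distrib)
qed

lemma borel_measurable_cum_loss: "k \<in> {1..K} \<Longrightarrow> cum_loss ell k t \<in> borel_measurable M"
  unfolding cum_loss_def[abs_def] by (intro borel_measurable_sum random_variable_loss) auto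

lemma prob_overtaken_le_tails:
  "prob (overtaken t) \<le> prob {w \<in> space M. t * mu 1 + t * margin 1 \<le> cum_loss ell 1 t w}
     + (\<Sum>k=2..K. prob {w \<in> space M. cum_loss ell k t w \<le> t * mu k - t * margin k})"
proof -
  define c where "c = t * ((mu 1 + mu 2) / 2)"
  have "prob (overtaken t) \<le> prob {w \<in> space M. c \<le> cum_loss ell 1 t w}
     + (\<Sum>k=2..K. prob {w \<in> space M. cum_loss ell k t w \<le> c})"
    unfolding overtaken_def using two_le_K by (intro measure_Min_less_le borel_measurable_cum_loss) auto
  moreover have "t * mu 1 + t * margin 1 = c" unfolding margin_1 c_def by (simp add: field_simps)
  moreover have "t * mu k - t * margin k = c" if "k \<in> {2..K}" for k
    using that by (simp add: c_def margin_other field_simps)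
  ultimately show ?thesis by simp
qed

lemma prob_overtaken_le_sum:
  fixes t :: nat and g :: "nat \<Rightarrow> real"
  assumes "prob {w \<in> space M. t * mu 1 + t * margin 1 \<le> cum_loss ell 1 t w} \<le> g 1"
    and "\<And>k. k \<in> {2..K} \<Longrightarrow> prob {w \<in> space M. cum_loss ell k t w \<le> t * mu k - t * margin k} \<le> g k"
  shows "prob (overtaken t) \<le> (\<Sum>k=1..K. g k)"
proof -
  have "(\<Sum>k=2..K. prob {w \<in> space M. cum_loss ell k t w \<le> t * mu k - t * margin k}) \<le> (\<Sum>k=2..K. g k)"
    by (rule sum_mono) (rule assms(2))
  then have "prob (overtaken t) \<le> g 1 + (\<Sum>k=2..K. g k)"
    using prob_overtaken_le_tails[of t] assms(1) by linarith
  also have "g 1 + (\<Sum>k=2..K. g k) = (\<Sum>k=1..K. g k)"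
    using sum.atLeast_Suc_atMost[of 1 K g] two_le_K unfolding Suc_1 by simp
  finally show ?thesis .
qed

lemma prob_cum_loss_tails_phi:
  fixes t :: nat and e :: real
  assumes "k \<in> {1..K}" "0 < e" "e \<le> t"
  shows "prob {w \<in> space M. t * mu k + e \<le> cum_loss ell k t w} \<le> exp (- e\<^sup>2 / (2 * t * theta M (ell k) t))"
    and "prob {w \<in> space M. cum_loss ell k t w \<le> t * mu k - e} \<le> exp (- e\<^sup>2 / (2 * t * theta M (ell k) t))"
proof -
  interpret unit_interval_sequence M "ell k" by (rule unit_interval_sequence_loss[OF assms(1)])
  show "prob {w \<in> space M. t * mu k + e \<le> cum_loss ell k t w} \<le> exp (- e\<^sup>2 / (2 * t * theta M (ell k) t))"
    using prob_centered_sum_ge[OF assms(2,3)] by (simp add: cum_loss_centered[OF assms(1)])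
  show "prob {w \<in> space M. cum_loss ell k t w \<le> t * mu k - e} \<le> exp (- e\<^sup>2 / (2 * t * theta M (ell k) t))"
    using prob_centered_sum_le[OF assms(2,3)] by (simp add: cum_loss_centered[OF assms(1)])
qed

lemma prob_cum_loss_tails_hoeffding:
  fixes t :: nat and e :: real
  assumes "k \<in> {1..K}" "indep_vars (\<lambda>_. borel) (ell k) {1..}" "0 \<le> e" "1 \<le> t"
  shows "prob {w \<in> space M. t * mu k + e \<le> cum_loss ell k t w} \<le> exp (- 2 * e\<^sup>2 / t)"
    and "prob {w \<in> space M. cum_loss ell k t w \<le> t * mu k - e} \<le> exp (- 2 * e\<^sup>2 / t)"
proof -
  interpret hoeffding: Hoeffding_ineq M "{1..t}" "ell k" "\<lambda>_. 0" "\<lambda>_. 1" "t * mu k"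
  proof unfold_locales
    show "indep_vars (\<lambda>_. borel) (ell k) {1..t}" using assms(2) by (rule indep_vars_subset) auto
    show "AE w in M. ell k i w \<in> {0..1}" if "i \<in> {1..t}" for i
      using loss_in_unit[of k i] assms(1) that by (auto elim: eventually_mono)
    show "t * mu k \<equiv> \<Sum>i\<in>{1..t}. expectation (ell k i)"
      using assms(1) by (simp add: expectation_loss)
  qed simp
  show "prob {w \<in> space M. t * mu k + e \<le> cum_loss ell k t w} \<le> exp (- 2 * e\<^sup>2 / t)"
    using hoeffding.Hoeffding_ineq_ge[OF assms(3)] assms(4) by (simp add: cum_loss_def)
  show "prob {w \<in> space M. cum_loss ell k t w \<le> t * mu k - e} \<le> exp (- 2 * e\<^sup>2 / t)"
    using hoeffding.Hoeffding_ineq_le[OF assms(3)] assms(4) by (simp add: cum_loss_def)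
qed

lemma prob_overtaken_phi_mixing:
  fixes t :: nat
  assumes "1 \<le> t"
  shows "prob (overtaken t)
           \<le> (\<Sum>k=1..K. exp (- real t * (mu 1 - mu k + (mu 2 - mu 1) / 2)\<^sup>2 / (2 * theta M (ell k) t)))"
proof (rule prob_overtaken_le_sum)
  have tail: "exp (- (t * margin k)\<^sup>2 / (2 * t * theta M (ell k) t))
      = exp (- real t * (mu 1 - mu k + (mu 2 - mu 1) / 2)\<^sup>2 / (2 * theta M (ell k) t))" for k
  proof -
    have "(t * margin k)\<^sup>2 / (2 * t * theta M (ell k) t) = t * (margin k)\<^sup>2 / (2 * theta M (ell k) t)"
      using assms by (simp add: power2_eq_square)
    then show ?thesis by (simp add: margin_sq)
  qed
  have margin: "0 < t * margin k" "t * margin k \<le> t" if "k \<in> {1..K}" for k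
    using assms margin_pos[OF that] margin_bounds(2)[OF that] by auto
  have one: "1 \<in> {1..K}" using two_le_K by simp
  show "prob {w \<in> space M. t * mu 1 + t * margin 1 \<le> cum_loss ell 1 t w}
      \<le> exp (- real t * (mu 1 - mu 1 + (mu 2 - mu 1) / 2)\<^sup>2 / (2 * theta M (ell 1) t))"
    using prob_cum_loss_tails_phi(1)[OF one margin[OF one]] unfolding tail .
  show "prob {w \<in> space M. cum_loss ell k t w \<le> t * mu k - t * margin k}
      \<le> exp (- real t * (mu 1 - mu k + (mu 2 - mu 1) / 2)\<^sup>2 / (2 * theta M (ell k) t))" if "k \<in> {2..K}" for k
  proof -
    have k: "k \<in> {1..K}" using that by simp
    show ?thesis using prob_cum_loss_tails_phi(2)[OF k margin[OF k]] unfolding tail .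
  qed
qed

lemma prob_overtaken_indep:
  fixes t :: nat
  assumes "\<And>k. k \<in> {1..K} \<Longrightarrow> indep_vars (\<lambda>_. borel) (ell k) {1..}" "1 \<le> t"
  shows "prob (overtaken t) \<le> exp (- real t * (mu 2 - mu 1)\<^sup>2 / 2)
           * (2 + (\<Sum>k=3..K. exp (- 2 * real t * (mu 1 - mu k) * (mu 2 - mu k))))"
proof -
  define h where "h k = exp (- 2 * real t * (mu 1 - mu k) * (mu 2 - mu k))" for k
  \<comment> \<open>Hoeffding's exponent 2 t margin_k^2 splits as t \<Delta>^2 / 2 + 2 t (\<mu>_1 - \<mu>_k) (\<mu>_2 - \<mu>_k).\<close>
  have tail: "exp (- 2 * (t * margin k)\<^sup>2 / t) = exp (- real t * (mu 2 - mu 1)\<^sup>2 / 2) * h k" for k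
  proof -
    have "- 2 * (t * margin k)\<^sup>2 / t = - t * (2 * (margin k)\<^sup>2)"
      using assms(2) by (simp add: power2_eq_square)
    then show ?thesis by (simp add: two_margin_sq h_def algebra_simps flip: exp_add)
  qed
  have "prob (overtaken t) \<le> (\<Sum>k=1..K. exp (- real t * (mu 2 - mu 1)\<^sup>2 / 2) * h k)"
  proof (rule prob_overtaken_le_sum)
    have margin: "0 \<le> t * margin k" if "k \<in> {1..K}" for k
      using margin_pos[OF that] by simp
    have one: "1 \<in> {1..K}" using two_le_K by simp
    show "prob {w \<in> space M. t * mu 1 + t * margin 1 \<le> cum_loss ell 1 t w} \<le> exp (- real t * (mu 2 - mu 1)\<^sup>2 / 2) * h 1"
      using prob_cum_loss_tails_hoeffding(1)[OF one assms(1)[OF one] margin[OF one] assms(2)] unfolding tail .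
    show "prob {w \<in> space M. cum_loss ell k t w \<le> t * mu k - t * margin k} \<le> exp (- real t * (mu 2 - mu 1)\<^sup>2 / 2) * h k"
      if "k \<in> {2..K}" for k
    proof -
      have k: "k \<in> {1..K}" using that by simp
      show ?thesis using prob_cum_loss_tails_hoeffding(2)[OF k assms(1)[OF k] margin[OF k] assms(2)] unfolding tail .
    qed
  qed
  also have "(\<Sum>k=1..K. h k) = 2 + (\<Sum>k=3..K. h k)"
  proof -
    have "(\<Sum>k=1..K. h k) = h 1 + (\<Sum>k=2..K. h k)"
      using sum.atLeast_Suc_atMost[of 1 K h] two_le_K unfolding Suc_1 by simp
    also have "(\<Sum>k=2..K. h k) = h 2 + (\<Sum>k=3..K. h k)"
      using sum.atLeast_Suc_atMost[of 2 K h] two_le_K by simp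
    finally show ?thesis by (simp add: h_def)
  qed
  ultimately show ?thesis by (simp add: h_def sum_distrib_left[symmetric])
qed

end

theorem mainTheorem4:
  fixes M :: "'a measure" and ell :: "nat \<Rightarrow> nat \<Rightarrow> 'a \<Rightarrow> real"
    and K :: nat and mu :: "nat \<Rightarrow> real" and t :: nat
  assumes P: "prob_space M"
    and K2: "2 \<le> K"
    and meas: "\<And>k s. k \<in> {1..K} \<Longrightarrow> 1 \<le> s \<Longrightarrow> ell k s \<in> borel_measurable M"
    and bnd: "\<And>k s. k \<in> {1..K} \<Longrightarrow> 1 \<le> s \<Longrightarrow> AE w in M. 0 \<le> ell k s w \<and> ell k s w \<le> 1"
    and means: "\<And>k s. k \<in> {1..K} \<Longrightarrow> 1 \<le> s \<Longrightarrow> integral\<^sup>L M (ell k s) = mu k"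
    and gap: "mu 1 < mu 2"
    and order: "\<And>k. 2 \<le> k \<Longrightarrow> k < K \<Longrightarrow> mu k \<le> mu (Suc k)"
    and t1: "1 \<le> t"
  shows
   "((\<forall>k\<in>{1..K}. prob_space.indep_vars M (\<lambda>_. borel) (ell k) {1..}
          \<and> (\<forall>s\<ge>1. distr M borel (ell k s) = distr M borel (ell k 1)))
     \<longrightarrow> measure M {w \<in> space M. cum_loss ell 1 t w > Min ((\<lambda>k. cum_loss ell k t w) ` {2..K})}
         \<le> exp (- real t * (mu 2 - mu 1)^2 / 2) *
            (2 + (\<Sum>k=3..K. exp (- 2 * real t * (mu 1 - mu k) * (mu 2 - mu k)))))
  \<and> ((\<forall>k\<in>{1..K}. strictly_stationary M (ell k) \<and> phi_mixing M (ell k))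
     \<longrightarrow> measure M {w \<in> space M. cum_loss ell 1 t w > Min ((\<lambda>k. cum_loss ell k t w) ` {2..K})}
         \<le> sqrt (exp 1) * (\<Sum>k=1..K.
              exp (- real t * (mu 1 - mu k + (mu 2 - mu 1) / 2)^2 / (2 * theta M (ell k) t))))"
proof -
  interpret expert_losses M ell K mu
    by (intro expert_losses.intro expert_losses_axioms.intro P) (use K2 meas bnd means gap order in auto)
  \<comment> \<open>Part (i) uses only the independence of each expert's losses, not their identical distribution.\<close>
  have indep: "prob (overtaken t) \<le> exp (- real t * (mu 2 - mu 1)^2 / 2) *
      (2 + (\<Sum>k=3..K. exp (- 2 * real t * (mu 1 - mu k) * (mu 2 - mu k))))"
    if "\<forall>k\<in>{1..K}. indep_vars (\<lambda>_. borel) (ell k) {1..} \<and> (\<forall>s\<ge>1. distr M borel (ell k s) = distr M borel (ell k 1))"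
    using that by (intro prob_overtaken_indep t1) auto
  have "prob (overtaken t) \<le> (\<Sum>k=1..K. exp (- real t * (mu 1 - mu k + (mu 2 - mu 1) / 2)^2 / (2 * theta M (ell k) t)))"
    by (rule prob_overtaken_phi_mixing[OF t1])
  also have "\<dots> \<le> sqrt (exp 1) * (\<Sum>k=1..K. exp (- real t * (mu 1 - mu k + (mu 2 - mu 1) / 2)^2 / (2 * theta M (ell k) t)))"
    using mult_right_mono[of 1 "sqrt (exp 1)"] by (simp add: sum_nonneg)
  finally show ?thesis using indep unfolding overtaken_def by blast
qed

end
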